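(* Under the standing assumptions (all robots have the same turning radius $r$; the group allocation satisfies the distinctness conditions, which is possible with $m=\lceil\log_2(n+2)\rceil+1$ groups; $G_m=\emptyset$), the following hold. (i) For every initial state, every robot $k$ and every vector $v\in\mathbb R^2$, there is a finite activation sequence whose net effect translates robot $k$ by $v$ and leaves the positions of all other robots unchanged. (ii) Consequently the swarm, with inputs $u$ measurable and taking values in $(0,\infty)$, is small-time locally controllable in positions at every initial state $(p_0,\Theta_0)$: $p_0$ lies in the interior of $\mathcal R_{(p_0,\Theta_0)}(T)$ for every $T>0$.
   Context: A swarm of $n$ planar robots; robot $j$ has state $(x_j,y_j,\theta_j)$, $\theta_j$ mod $2\pi$; all robots have the same turning radius $r>0$. Groups $G_1,\dots,G_m$ with activation vectors $\alpha_i\in\{0,1\}^n$ ($\alpha_{i,j}=1$ iff robot $j\in G_i$); standing assumptions: the patterns $(\alpha_{1,j},\dots,\alpha_{m-1,j})$, $j=1,\dots,n$, are pairwise distinct, none all zeros and none all ones, and $G_m=\emptyset$. Dynamics: a switching signal $\nu(t)\in\{1,\dots,m\}$ selects the active group and a scalar input $u(t)>0$ is applied; with $a_j=\alpha_{\nu(t),j}$, robot $j$ obeys $\dot x_j=a_j\cos\theta_j\,u$, $\dot y_j=a_j\sin\theta_j\,u$, $\dot\theta_j=(1-a_j)u/r$ (members of the active group translate forward, all others rotate counterclockwise in place). Write $p=(x_1,y_1,\dots,x_n,y_n)\in\mathbb R^{2n}$ for the positions and $\Theta=(\theta_1,\dots,\theta_n)$ for the orientations. $\mathcal R_{(p_0,\Theta_0)}(T)$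 is the set of all position vectors $p(t)$, $0\le t\le T$, reachable by trajectories starting at $(p_0,\Theta_0)$. The system is small-time locally controllable (STLC) in positions at $(p_0,\Theta_0)$ if $p_0$ is in the interior of $\mathcal R_{(p_0,\Theta_0)}(T)$ for all $T>0$. *)

theory Defs
  imports "HOL-Analysis.Analysis"
begin

text \<open>Robots are indexed by a finite type 'n (n = CARD('n)).  Planar positions are
  complex numbers; the position vector p is an element of complex^'n (i.e. R^(2n)),
  the orientation vector is an element of real^'n.  Groups are indexed 1..m;
  alpha i j holds iff robot j belongs to group G_i.\<close>

definition group_alloc_ok :: "(nat \<Rightarrow> 'n::finite \<Rightarrow> bool) \<Rightarrow> nat \<Rightarrow> bool" where
  "group_alloc_ok \<alpha> m \<longleftrightarrow>
     (\<forall>j k. j \<noteq> k \<longrightarrow> (\<exists>i\<in>{1..m-1}. \<alpha> i j \<noteq> \<alpha> i k)) \<and>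
     (\<forall>j. \<exists>i\<in>{1..m-1}. \<alpha> i j) \<and>
     (\<forall>j. \<exists>i\<in>{1..m-1}. \<not> \<alpha> i j) \<and>
     (\<forall>j. \<not> \<alpha> m j)"

text \<open>Net effect of activating group i while the integral of the input equals s:
  members translate by s in their heading direction, non-members rotate by s/r
  (exact flow of the dynamics over a segment with constant switching signal).\<close>

definition act_step :: "(nat \<Rightarrow> 'n::finite \<Rightarrow> bool) \<Rightarrow> real \<Rightarrow> nat \<times> real
     \<Rightarrow> (complex^'n) \<times> (real^'n) \<Rightarrow> (complex^'n) \<times> (real^'n)" where
  "act_step \<alpha> r is st =
     (case is of (i, s) \<Rightarrow> case st of (p, \<Theta>) \<Rightarrow>
       ((\<chi> j. if \<alpha> i j then p$j + complex_of_real s * cis (\<Theta>$j) else p$j),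
        (\<chi> j. if \<alpha> i j then \<Theta>$j else \<Theta>$j + s / r)))"

definition piecewise_switching :: "nat \<Rightarrow> real \<Rightarrow> (real \<Rightarrow> nat) \<Rightarrow> bool" where
  "piecewise_switching m T \<nu> \<longleftrightarrow>
     (\<forall>s\<in>{0..T}. \<nu> s \<in> {1..m}) \<and>
     (\<exists>(tt :: nat \<Rightarrow> real) N. tt 0 = 0 \<and> tt N = T \<and> (\<forall>k<N. tt k < tt (Suc k)) \<and>
        (\<forall>k<N. \<forall>s\<in>{tt k..<tt (Suc k)}. \<nu> s = \<nu> (tt k)))"

text \<open>Admissible input: measurable, positive-valued (and integrable, so that
  Caratheodory solutions exist) on [0,T].\<close>

definition admissible_input :: "real \<Rightarrow> (real \<Rightarrow> real) \<Rightarrow> bool" where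
  "admissible_input T u \<longleftrightarrow>
     u \<in> borel_measurable (restrict_space lborel {0..T}) \<and>
     set_integrable lborel {0..T} u \<and> (\<forall>t\<in>{0..T}. u t > 0)"

definition is_traj :: "(nat \<Rightarrow> 'n::finite \<Rightarrow> bool) \<Rightarrow> nat \<Rightarrow> real \<Rightarrow> real
     \<Rightarrow> (real \<Rightarrow> nat) \<Rightarrow> (real \<Rightarrow> real) \<Rightarrow> complex^'n \<Rightarrow> real^'n
     \<Rightarrow> (real \<Rightarrow> complex^'n) \<Rightarrow> (real \<Rightarrow> real^'n) \<Rightarrow> bool" where
  "is_traj \<alpha> m r T \<nu> u p0 \<Theta>0 p \<Theta> \<longleftrightarrow>
     piecewise_switching m T \<nu> \<and> admissible_input T u \<and>
     (\<forall>t\<in>{0..T}. \<forall>j.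
        \<Theta> t $ j = \<Theta>0 $ j + (LINT s:{0..t}|lborel. (if \<alpha> (\<nu> s) j then 0 else u s / r)) \<and>
        p t $ j = p0 $ j + (LINT s:{0..t}|lborel.
                     (if \<alpha> (\<nu> s) j then complex_of_real (u s) * cis (\<Theta> s $ j) else 0)))"

definition reach_set :: "(nat \<Rightarrow> 'n::finite \<Rightarrow> bool) \<Rightarrow> nat \<Rightarrow> real
     \<Rightarrow> complex^'n \<Rightarrow> real^'n \<Rightarrow> real \<Rightarrow> (complex^'n) set" where
  "reach_set \<alpha> m r p0 \<Theta>0 T =
     {p t | \<nu> u p \<Theta> t. is_traj \<alpha> m r T \<nu> u p0 \<Theta>0 p \<Theta> \<and> t \<in> {0..T}}"

end

theory Submission
  imports Defs
begin

text \<open>Every group motion either translates a robot in its body frame or turns it in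
  place, and the idle group \<open>G\<^sub>m\<close> turns everybody at once.  A commutator (drive a set
  forward, turn a second set by \<open>\<pi>\<close>, drive back, turn again) displaces exactly the robots
  in the intersection of the two sets.  Since the activation patterns separate the robots,
  intersecting one group with the sets that agree with robot \<open>k\<close> on each group leaves
  \<open>{k}\<close>, so every robot can be displaced alone, which is (i).  As the input may be
  arbitrarily large, any finite activation sequence can be run within any time \<open>T > 0\<close>
  with a constant input; by (i) every position is reachable, so the reachable set is the
  whole space, which gives (ii).\<close>

lemma cis_add_2pi_multiple: "n \<in> \<int> \<Longrightarrow> cis (x + 2 * pi * n) = cis x"
  by (simp add: cis_mult[symmetric])

lemma cis_sum_eq:
  assumes "c > 0" "cmod w \<le> 2 * c"
  obtains \<phi>1 \<phi>2 where "complex_of_real c * (cis \<phi>1 + cis \<phi>2) = w"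
proof -
  define \<delta> where "\<delta> = arccos (cmod w / (2 * c))"
  have "0 \<le> cmod w / (2 * c)" "cmod w / (2 * c) \<le> 1"
    using assms by (simp_all add: field_simps)
  then have cos_\<delta>: "cos \<delta> = cmod w / (2 * c)"
    unfolding \<delta>_def by (intro cos_arccos) linarith+
  have "cis (Arg w + \<delta>) + cis (Arg w - \<delta>) = cis (Arg w) * (cis \<delta> + cis (-\<delta>))"
    by (simp add: cis_mult distrib_left)
  also have "cis \<delta> + cis (-\<delta>) = complex_of_real (2 * cos \<delta>)"
    by (simp add: complex_eq_iff)
  finally have "complex_of_real c * (cis (Arg w + \<delta>) + cis (Arg w - \<delta>))
      = complex_of_real (cmod w) * cis (Arg w)"
    using assms by (simp add: cos_\<delta>)
  also have "\<dots> = w"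
    using rcis_cmod_Arg[of w] by (simp add: rcis_def)
  finally show ?thesis by (rule that)
qed

lemma set_integral_indicator_sum:
  fixes a :: "nat \<Rightarrow> 'b::{banach, second_countable_topology}" and J :: "nat \<Rightarrow> real set"
  assumes "\<And>k. J k \<in> sets lborel"
  shows "(LINT s:{0..t}|lborel. (\<Sum>k<N. indicator (J k) s *\<^sub>R a k))
       = (\<Sum>k<N. measure lborel (J k \<inter> {0..t}) *\<^sub>R a k)"
proof -
  have finite: "emeasure lborel (J k \<inter> {0..t}) < \<infinity>" for k
  proof -
    have "emeasure lborel (J k \<inter> {0..t}) \<le> emeasure lborel {0..t}"
      by (rule emeasure_mono) auto
    also have "\<dots> < \<infinity>" by (simp add: emeasure_lborel_Icc_eq)
    finally show ?thesis .
  qed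
  have "(\<lambda>s. indicator {0..t} s *\<^sub>R (\<Sum>k<N. indicator (J k) s *\<^sub>R a k))
      = (\<lambda>s. \<Sum>k<N. indicator (J k \<inter> {0..t}) s *\<^sub>R a k)"
    by (rule ext, simp only: scaleR_sum_right scaleR_scaleR indicator_inter_arith mult.commute)
  then have "(LINT s:{0..t}|lborel. (\<Sum>k<N. indicator (J k) s *\<^sub>R a k))
      = integral\<^sup>L lborel (\<lambda>s. \<Sum>k<N. indicator (J k \<inter> {0..t}) s *\<^sub>R a k)"
    by (simp only: set_lebesgue_integral_def)
  also have "\<dots> = (\<Sum>k<N. measure lborel (J k \<inter> {0..t}) *\<^sub>R a k)"
    using assms finite
    by (intro has_bochner_integral_integral_eq has_bochner_integral_sum
        has_bochner_integral_indicator) simp_all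
  finally show ?thesis .
qed

type_synonym 'n state = "(complex^'n) \<times> (real^'n)"

locale swarm =
  fixes \<alpha> :: "nat \<Rightarrow> 'n::finite \<Rightarrow> bool" and m :: nat and r :: real
  assumes r_pos: "r > 0" and alloc_ok: "group_alloc_ok \<alpha> m"
begin

definition admissible_seq :: "(nat \<times> real) list \<Rightarrow> bool" where
  "admissible_seq seq \<longleftrightarrow> (\<forall>(i, s)\<in>set seq. i \<in> {1..m} \<and> s > 0)"

text \<open>Headings only matter modulo \<open>2\<pi>\<close>, so states are compared through their configuration.\<close>

definition config :: "'n state \<Rightarrow> (complex^'n) \<times> (complex^'n)" where
  "config st = (fst st, \<chi> j. cis (snd st $ j))"

definition achievable :: "('n state \<Rightarrow> 'n state) \<Rightarrow> bool" where
  "achievable F \<longleftrightarrow>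
     (\<forall>st. \<exists>seq. admissible_seq seq \<and> config (fold (act_step \<alpha> r) seq st) = config (F st))"

lemma not_in_last_group [simp]: "\<not> \<alpha> m j"
  using alloc_ok by (simp add: group_alloc_ok_def)

lemma m_pos: "m \<ge> 1"
proof -
  obtain i where "i \<in> {1..m-1}" "\<alpha> i (undefined :: 'n)"
    using alloc_ok unfolding group_alloc_ok_def by blast
  then show ?thesis by auto
qed

lemma admissible_seq_append [simp]:
  "admissible_seq (xs @ ys) \<longleftrightarrow> admissible_seq xs \<and> admissible_seq ys"
  by (auto simp: admissible_seq_def)

lemma config_eqI:
  "fst a = fst b \<Longrightarrow> (\<And>j. cis (snd a $ j) = cis (snd b $ j)) \<Longrightarrow> config a = config b"
  by (simp add: config_def vec_eq_iff)

lemma config_act_step: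
  "config a = config b \<Longrightarrow> config (act_step \<alpha> r x a) = config (act_step \<alpha> r x b)"
  by (cases x; cases a; cases b)
    (auto simp: config_def act_step_def vec_eq_iff cis_mult[symmetric])

lemma config_fold:
  "config a = config b \<Longrightarrow> config (fold (act_step \<alpha> r) seq a) = config (fold (act_step \<alpha> r) seq b)"
proof (induction seq arbitrary: a b)
  case (Cons x seq)
  show ?case
    using Cons.IH[OF config_act_step[OF Cons.prems, of x]] by simp
qed simp

lemma achievable_comp: "achievable F \<Longrightarrow> achievable G \<Longrightarrow> achievable (G \<circ> F)"
  unfolding achievable_def
proof
  fix st
  assume F: "\<forall>st. \<exists>seq. admissible_seq seq \<and> config (fold (act_step \<alpha> r) seq st) = config (F st)"
    and G: "\<forall>st. \<exists>seq. admissible_seq seq \<and> config (fold (act_step \<alpha> r) seq st) = config (G st)"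
  obtain xs where xs: "admissible_seq xs" "config (fold (act_step \<alpha> r) xs st) = config (F st)"
    using F by blast
  obtain ys where ys: "admissible_seq ys" "config (fold (act_step \<alpha> r) ys (F st)) = config (G (F st))"
    using G by blast
  have "config (fold (act_step \<alpha> r) (xs @ ys) st) = config ((G \<circ> F) st)"
    using config_fold[OF xs(2), of ys] ys(2) by simp
  then show "\<exists>seq. admissible_seq seq \<and> config (fold (act_step \<alpha> r) seq st) = config ((G \<circ> F) st)"
    using xs(1) ys(1) by (intro exI[of _ "xs @ ys"]) simp
qed

lemma achievable_cong:
  "achievable F \<Longrightarrow> (\<And>st. config (F st) = config (G st)) \<Longrightarrow> achievable G"
  unfolding achievable_def by simp

lemma act_step_angle:
  "act_step \<alpha> r (i, r * x) (p, \<Theta>) =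
     ((\<chi> j. if \<alpha> i j then p$j + complex_of_real (r * x) * cis (\<Theta>$j) else p$j),
      (\<chi> j. if \<alpha> i j then \<Theta>$j else \<Theta>$j + x))"
proof -
  have "r * x / r = x" using r_pos by simp
  then show ?thesis unfolding act_step_def by (simp only: prod.case)
qed

lemma achievable_act_step: "i \<in> {1..m} \<Longrightarrow> x > 0 \<Longrightarrow> achievable (act_step \<alpha> r (i, r * x))"
  unfolding achievable_def using r_pos
  by (intro allI exI[of _ "[(i, r * x)]"]) (simp add: admissible_seq_def)

definition rotate_all :: "real \<Rightarrow> 'n state \<Rightarrow> 'n state" where
  "rotate_all \<phi> st = (fst st, \<chi> j. snd st $ j + \<phi>)"

lemma achievable_rotate_all: "achievable (rotate_all \<phi>)"
proof -
  obtain N :: nat where "- \<phi> / (2 * pi) < real N"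
    using reals_Archimedean2 by blast
  then have pos: "\<phi> + 2 * pi * real N > 0"
    by (simp add: field_simps)
  have "achievable (act_step \<alpha> r (m, r * (\<phi> + 2 * pi * real N)))"
    using m_pos pos by (intro achievable_act_step) auto
  then show ?thesis
  proof (rule achievable_cong)
    fix st :: "'n state"
    show "config (act_step \<alpha> r (m, r * (\<phi> + 2 * pi * real N)) st) = config (rotate_all \<phi> st)"
      by (cases st) (simp add: act_step_angle rotate_all_def config_def vec_eq_iff
          add.assoc[symmetric] cis_add_2pi_multiple)
  qed
qed

definition drive :: "'n set \<Rightarrow> complex \<Rightarrow> 'n state \<Rightarrow> 'n state" where
  "drive S w st = ((\<chi> j. if j \<in> S then fst st $ j + w * cis (snd st $ j) else fst st $ j), snd st)"

definition reverse :: "'n set \<Rightarrow> 'n state \<Rightarrow> 'n state" where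
  "reverse T st = (fst st, \<chi> j. if j \<in> T then snd st $ j + pi else snd st $ j)"

definition movable :: "'n set \<Rightarrow> bool" where
  "movable S \<longleftrightarrow> (\<forall>w. achievable (drive S w))"

text \<open>Drive \<open>S\<close> forward, reverse \<open>T\<close>, drive \<open>S\<close> back and reverse \<open>T\<close> again:
  the robots of \<open>S - T\<close> return, those of \<open>S \<inter> T\<close> are displaced twice.\<close>

lemma movable_Int:
  assumes "movable S" and "achievable (reverse T)"
  shows "movable (S \<inter> T)"
  unfolding movable_def
proof
  fix w
  have "achievable (reverse T \<circ> drive S (- w / 2) \<circ> reverse T \<circ> drive S (w / 2))"
    using assms unfolding movable_def by (blast intro: achievable_comp)
  then show "achievable (drive (S \<inter> T) w)"
    by (rule achievable_cong)
      (auto intro!: config_eqI simp: drive_def reverse_def vec_eq_iff cis_mult[symmetric])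
qed

lemma achievable_reverse_Compl: "achievable (reverse T) \<Longrightarrow> achievable (reverse (- T))"
  by (erule achievable_cong[OF achievable_comp[OF achievable_rotate_all[of pi]]])
    (auto intro!: config_eqI simp: reverse_def rotate_all_def cis_mult[symmetric])

text \<open>Group \<open>i\<close> drives \<open>r\<pi>/2\<close> while the others turn by \<open>\<pi>/2\<close>, then the idle group turns
  everybody by \<open>\<pi>\<close>. Done twice, group \<open>i\<close> drives back to its start and turns by \<open>2\<pi>\<close>,
  while the others turn by \<open>3\<pi>\<close>.\<close>

lemma achievable_reverse_nonmembers:
  assumes "i \<in> {1..m}"
  shows "achievable (reverse {j. \<not> \<alpha> i j})"
proof -
  let ?quarter = "act_step \<alpha> r (i, r * (pi / 2))" and ?half = "act_step \<alpha> r (m, r * pi)"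
  have "achievable (?half \<circ> ?quarter \<circ> ?half \<circ> ?quarter)"
    using assms m_pos by (intro achievable_comp achievable_act_step) auto
  then show ?thesis
  proof (rule achievable_cong)
    fix st :: "'n state"
    obtain p \<Theta> where st: "st = (p, \<Theta>)" by fastforce
    show "config ((?half \<circ> ?quarter \<circ> ?half \<circ> ?quarter) st) = config (reverse {j. \<not> \<alpha> i j} st)"
      unfolding st comp_apply
      by (intro config_eqI; simp only: act_step_angle) (simp_all add: reverse_def vec_eq_iff cis_mult[symmetric])
  qed
qed

text \<open>Writing \<open>w = c (cis \<phi>\<^sub>1 + cis \<phi>\<^sub>2)\<close> with \<open>c \<in> 2\<pi>r\<nat>\<close>, group \<open>a\<close> drives the distance \<open>c\<close>
  in the body directions \<open>\<phi>\<^sub>1\<close> and \<open>\<phi>\<^sub>2\<close> (set up by turning everybody), while the other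
  robots only make full turns.\<close>

lemma movable_group:
  assumes "a \<in> {1..m}"
  shows "movable {j. \<alpha> a j}"
  unfolding movable_def
proof
  fix w
  obtain N :: nat where N: "cmod w / (4 * pi * r) < real N"
    using reals_Archimedean2 by blast
  define c where "c = r * (2 * pi * real N)"
  have "0 \<le> cmod w / (4 * pi * r)" using r_pos by simp
  with N have "N > 0" by linarith
  then have "c > 0" using r_pos by (simp add: c_def)
  moreover have "cmod w \<le> 2 * c"
    using N r_pos by (simp add: c_def field_simps)
  ultimately obtain \<phi>1 \<phi>2 where \<phi>: "complex_of_real c * (cis \<phi>1 + cis \<phi>2) = w"
    using cis_sum_eq by blast
  let ?drive_c = "act_step \<alpha> r (a, r * (2 * pi * real N))"
  have "achievable (rotate_all (-\<phi>2) \<circ> ?drive_c \<circ> rotate_all (\<phi>2 - \<phi>1) \<circ> ?drive_c \<circ> rotate_all \<phi>1)"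
    using assms \<open>N > 0\<close> by (intro achievable_comp achievable_rotate_all achievable_act_step) auto
  then show "achievable (drive {j. \<alpha> a j} w)"
  proof (rule achievable_cong)
    fix st :: "'n state"
    obtain p \<Theta> where st: "st = (p, \<Theta>)" by fastforce
    have "complex_of_real c * cis (\<Theta> $ j + \<phi>1) + complex_of_real c * cis (\<Theta> $ j + \<phi>2)
        = w * cis (\<Theta> $ j)" for j
      unfolding \<phi>[symmetric] by (simp add: cis_mult[symmetric] algebra_simps)
    moreover have "cis (\<Theta> $ j + \<phi>1 + 2 * pi * real N + (\<phi>2 - \<phi>1) + 2 * pi * real N + - \<phi>2)
        = cis (\<Theta> $ j)" for j
      using cis_add_2pi_multiple[of "2 * real N" "\<Theta> $ j"] by (simp add: algebra_simps)
    ultimately show "config ((rotate_all (-\<phi>2) \<circ> ?drive_c \<circ> rotate_all (\<phi>2 - \<phi>1) \<circ> ?drive_c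
        \<circ> rotate_all \<phi>1) st) = config (drive {j. \<alpha> a j} w st)"
      unfolding st comp_apply rotate_all_def
      by (intro config_eqI; simp only: act_step_angle fst_conv snd_conv)
        (simp_all add: drive_def vec_eq_iff c_def[symmetric] add.assoc)
  qed
qed

text \<open>Since the activation patterns are distinct, intersecting a group containing \<open>k\<close> with,
  for every group, the robots that agree with \<open>k\<close> on it leaves \<open>{k}\<close>.\<close>

lemma movable_singleton: "movable {k}"
proof -
  obtain a where a: "a \<in> {1..m-1}" "\<alpha> a k"
    using alloc_ok unfolding group_alloc_ok_def by blast
  have agree: "achievable (reverse {j. \<alpha> i j = \<alpha> i k})" if "i \<in> {1..m}" for i
  proof (cases "\<alpha> i k")
    case True
    then have "{j. \<alpha> i j = \<alpha> i k} = - {j. \<not> \<alpha> i j}" by auto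
    then show ?thesis
      using achievable_reverse_Compl[OF achievable_reverse_nonmembers[OF that]] by simp
  next
    case False
    then have "{j. \<alpha> i j = \<alpha> i k} = {j. \<not> \<alpha> i j}" by auto
    then show ?thesis using achievable_reverse_nonmembers[OF that] by simp
  qed
  have restrict: "movable ({j. \<alpha> a j} \<inter> {j. \<forall>i\<in>I. \<alpha> i j = \<alpha> i k})"
    if "finite I" "I \<subseteq> {1..m}" for I
    using that
  proof (induction I rule: finite_induct)
    case empty
    from a have "a \<in> {1..m}" by auto
    then show ?case using movable_group[of a] by simp
  next
    case (insert i I)
    have "{j. \<alpha> a j} \<inter> {j. \<forall>i'\<in>insert i I. \<alpha> i' j = \<alpha> i' k}
        = ({j. \<alpha> a j} \<inter> {j. \<forall>i\<in>I. \<alpha> i j = \<alpha> i k}) \<inter> {j. \<alpha> i j = \<alpha> i k}"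
      by auto
    then show ?case using movable_Int[OF insert.IH agree] insert.prems by simp
  qed
  have "movable ({j. \<alpha> a j} \<inter> {j. \<forall>i\<in>{1..m-1}. \<alpha> i j = \<alpha> i k})"
    by (rule restrict) auto
  moreover have "{j. \<alpha> a j} \<inter> {j. \<forall>i\<in>{1..m-1}. \<alpha> i j = \<alpha> i k} = {k}"
    using alloc_ok a unfolding group_alloc_ok_def by blast
  ultimately show ?thesis by simp
qed

definition translate :: "complex^'n \<Rightarrow> 'n state \<Rightarrow> 'n state" where
  "translate d st = (fst st + d, snd st)"

lemma achievable_translate_one: "achievable (translate (\<chi> j. if j = k then v else 0))"
  unfolding achievable_def
proof
  fix st :: "'n state"
  obtain seq where "admissible_seq seq"
      and seq: "config (fold (act_step \<alpha> r) seq st) = config (drive {k} (v * cis (- snd st $ k)) st)"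
    using movable_singleton unfolding movable_def achievable_def by blast
  moreover have "drive {k} (v * cis (- snd st $ k)) st = translate (\<chi> j. if j = k then v else 0) st"
    by (simp add: drive_def translate_def vec_eq_iff mult.assoc cis_mult)
  ultimately show "\<exists>seq. admissible_seq seq \<and>
      config (fold (act_step \<alpha> r) seq st) = config (translate (\<chi> j. if j = k then v else 0) st)"
    by auto
qed

lemma translate_robot:
  "\<exists>seq. admissible_seq seq \<and>
     fst (fold (act_step \<alpha> r) seq (p0, \<Theta>0)) = p0 + (\<chi> j. if j = k then v else 0)"
  using achievable_translate_one[of k v]
  unfolding achievable_def config_def translate_def by fastforce

lemma achievable_translate: "achievable (translate d)"
proof -
  have "achievable (translate (\<chi> j. if j \<in> K then d $ j else 0))" if "finite K" for K
    using that
  proof (induction K rule: finite_induct)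
    case empty
    have "translate (\<chi> j. if j \<in> {} then d $ j else 0) = id"
      by (simp add: translate_def fun_eq_iff vec_eq_iff)
    moreover have "achievable id"
      unfolding achievable_def by (intro allI exI[of _ "[]"]) (simp add: admissible_seq_def)
    ultimately show ?case by (simp add: id_def)
  next
    case (insert k K)
    have "translate (\<chi> j. if j \<in> insert k K then d $ j else 0)
        = translate (\<chi> j. if j = k then d $ k else 0) \<circ> translate (\<chi> j. if j \<in> K then d $ j else 0)"
      using insert.hyps(2) by (auto simp: translate_def fun_eq_iff vec_eq_iff)
    then show ?case
      using achievable_comp[OF insert.IH achievable_translate_one] by (simp only:)
  qed
  from this[of UNIV] show ?thesis by simp
qed

lemma reachable_position:
  "\<exists>seq. admissible_seq seq \<and> seq \<noteq> [] \<and> fst (fold (act_step \<alpha> r) seq st) = p"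
proof -
  obtain seq where "admissible_seq seq"
      and seq: "config (fold (act_step \<alpha> r) seq st) = config (translate (p - fst st) st)"
    using achievable_translate unfolding achievable_def by blast
  then have "fst (fold (act_step \<alpha> r) (seq @ [(m, 1)]) st) = p"
    by (cases "fold (act_step \<alpha> r) seq st")
      (simp add: config_def translate_def act_step_def vec_eq_iff)
  with \<open>admissible_seq seq\<close> m_pos show ?thesis
    by (intro exI[of _ "seq @ [(m, 1)]"]) (simp add: admissible_seq_def)
qed

end

text \<open>Segment \<open>k\<close> of the sequence is run during \<open>slot k\<close> with the constant input \<open>speed\<close>;
  the last slot is closed so that the slots partition \<open>[0, T]\<close>.\<close>

locale schedule = swarm \<alpha> m r for \<alpha> :: "nat \<Rightarrow> 'n::finite \<Rightarrow> bool" and m r +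
  fixes seq :: "(nat \<times> real) list" and p0 :: "complex^'n" and \<Theta>0 :: "real^'n" and T :: real
  assumes seq_admissible: "admissible_seq seq" and seq_nonempty: "seq \<noteq> []" and T_pos: "T > 0"
begin

definition grp :: "nat \<Rightarrow> nat" where
  "grp k = fst (seq ! k)"

definition dur :: "nat \<Rightarrow> real" where
  "dur k = snd (seq ! k)"

definition speed :: real where
  "speed = (\<Sum>k<length seq. dur k) / T"

definition switch_time :: "nat \<Rightarrow> real" where
  "switch_time k = (\<Sum>l<k. dur l) / speed"

definition slot :: "nat \<Rightarrow> real set" where
  "slot k = (if Suc k = length seq then {switch_time k..switch_time (Suc k)}
             else {switch_time k..<switch_time (Suc k)})"

definition slot_index :: "real \<Rightarrow> nat" where
  "slot_index s = (LEAST k. s < switch_time (Suc k) \<or> Suc k = length seq)"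

definition switching :: "real \<Rightarrow> nat" where
  "switching s = grp (slot_index s)"

definition heading_before :: "nat \<Rightarrow> real^'n" where
  "heading_before k = (\<chi> j. \<Theta>0 $ j + (\<Sum>l<k. if \<alpha> (grp l) j then 0 else dur l / r))"

definition position_before :: "nat \<Rightarrow> complex^'n" where
  "position_before k = (\<chi> j. p0 $ j +
     (\<Sum>l<k. if \<alpha> (grp l) j then complex_of_real (dur l) * cis (heading_before l $ j) else 0))"

definition heading :: "real \<Rightarrow> real^'n" where
  "heading t = (\<chi> j. \<Theta>0 $ j +
     (\<Sum>k<length seq. measure lborel (slot k \<inter> {0..t}) * (if \<alpha> (grp k) j then 0 else speed / r)))"

definition position :: "real \<Rightarrow> complex^'n" where
  "position t = (\<chi> j. p0 $ j + (\<Sum>k<length seq. measure lborel (slot k \<inter> {0..t}) *\<^sub>R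
     (if \<alpha> (grp k) j then complex_of_real speed * cis (heading_before k $ j) else 0)))"

lemma grp_dur: "k < length seq \<Longrightarrow> grp k \<in> {1..m} \<and> dur k > 0"
  using seq_admissible nth_mem[of k seq] unfolding admissible_seq_def grp_def dur_def
  by (cases "seq ! k") auto

lemma speed_pos: "speed > 0"
proof -
  have "(\<Sum>k<length seq. dur k) > 0"
    using seq_nonempty grp_dur by (intro sum_pos) auto
  then show ?thesis using T_pos by (simp add: speed_def)
qed

lemma switch_time_0 [simp]: "switch_time 0 = 0"
  by (simp add: switch_time_def)

lemma switch_time_last: "switch_time (length seq) = T"
proof -
  have "(\<Sum>k<length seq. dur k) \<noteq> 0" using speed_pos by (auto simp: speed_def)
  then show ?thesis using T_pos by (simp add: switch_time_def speed_def)
qed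

lemma switch_time_Suc: "switch_time (Suc k) = switch_time k + dur k / speed"
  by (simp add: switch_time_def add_divide_distrib)

lemma switch_time_less: "a < b \<Longrightarrow> b \<le> length seq \<Longrightarrow> switch_time a < switch_time b"
proof (induction b rule: less_Suc_induct)
  case (1 i)
  then show ?case using grp_dur[of i] speed_pos by (simp add: switch_time_Suc)
qed auto

lemma switch_time_mono: "a \<le> b \<Longrightarrow> b \<le> length seq \<Longrightarrow> switch_time a \<le> switch_time b"
  using switch_time_less by (cases "a = b") (auto intro: less_imp_le)

lemma slot_sets: "slot k \<in> sets lborel"
  by (simp add: slot_def)

lemma slot_bounds: "s \<in> slot k \<Longrightarrow> switch_time k \<le> s \<and> s \<le> switch_time (Suc k)"
  by (auto simp: slot_def split: if_splits)

lemma measure_slot: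
  assumes "k < length seq"
  shows "measure lborel (slot k) = dur k / speed"
proof -
  have "switch_time k \<le> switch_time (Suc k)"
    using switch_time_less[of k "Suc k"] assms by simp
  then have "measure lborel (slot k) = switch_time (Suc k) - switch_time k"
    unfolding slot_def
    by (simp only: if_distrib[of "measure lborel"] measure_lborel_Icc measure_lborel_Ico if_cancel)
  then show ?thesis by (simp add: switch_time_Suc)
qed

lemma slot_subset:
  assumes "k < length seq"
  shows "slot k \<subseteq> {0..T}"
proof
  fix s assume "s \<in> slot k"
  moreover have "0 \<le> switch_time k"
    using switch_time_mono[of 0 k] assms by simp
  moreover have "switch_time (Suc k) \<le> T"
    using switch_time_mono[of "Suc k" "length seq"] assms by (simp add: switch_time_last)
  ultimately show "s \<in> {0..T}" using slot_bounds[of s k] by auto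
qed

lemma slot_before: "s \<in> slot k \<Longrightarrow> Suc k < length seq \<Longrightarrow> s < switch_time (Suc k)"
  by (simp add: slot_def)

lemma slot_index: assumes "s \<in> {0..T}" shows "slot_index s < length seq" "s \<in> slot (slot_index s)"
proof -
  let ?P = "\<lambda>k. s < switch_time (Suc k) \<or> Suc k = length seq"
  have "?P (length seq - 1)" using seq_nonempty by simp
  then have P: "?P (slot_index s)" and "slot_index s \<le> length seq - 1"
    unfolding slot_index_def by (rule LeastI, rule Least_le)
  moreover have "length seq > 0" using seq_nonempty by simp
  ultimately show "slot_index s < length seq" by linarith
  have "switch_time (slot_index s) \<le> s"
  proof (cases "slot_index s")
    case (Suc k)
    then have "\<not> ?P k" using not_less_Least[of k ?P] unfolding slot_index_def by simp
    then show ?thesis using Suc by simp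
  qed (use assms in simp)
  then show "s \<in> slot (slot_index s)"
    using P assms by (auto simp: slot_def switch_time_last)
qed

lemma slot_index_eq: assumes "k < length seq" "s \<in> slot k" shows "slot_index s = k"
proof -
  have s: "s \<in> {0..T}" using slot_subset assms by blast
  have False if "a < b" "b < length seq" "s \<in> slot a" "s \<in> slot b" for a b
    using slot_before[of s a] slot_bounds[of s b] switch_time_mono[of "Suc a" b] that by auto
  then show ?thesis using slot_index[OF s] assms by (metis linorder_neqE_nat)
qed

lemma integral_piecewise:
  fixes a :: "nat \<Rightarrow> 'b::{banach, second_countable_topology}"
  assumes t: "t \<in> {0..T}" and g: "\<And>s. s \<in> {0..t} \<Longrightarrow> g s = a (slot_index s)"
  shows "(LINT s:{0..t}|lborel. g s) = (\<Sum>k<length seq. measure lborel (slot k \<inter> {0..t}) *\<^sub>R a k)"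
proof -
  have "g s = (\<Sum>k<length seq. indicator (slot k) s *\<^sub>R a k)" if s: "s \<in> {0..t}" for s
  proof -
    have sT: "s \<in> {0..T}" using s t by auto
    have "indicator (slot k) s *\<^sub>R a k = (if k = slot_index s then a k else 0)"
      if "k \<in> {..<length seq}" for k
    proof (cases "k = slot_index s")
      case True
      then show ?thesis using slot_index(2)[OF sT] by simp
    next
      case False
      then have "s \<notin> slot k" using slot_index_eq[of k s] that by auto
      then show ?thesis using False by simp
    qed
    then have "(\<Sum>k<length seq. indicator (slot k) s *\<^sub>R a k)
        = (\<Sum>k<length seq. if k = slot_index s then a k else 0)"
      by (rule sum.cong[OF refl])
    also have "\<dots> = a (slot_index s)"
      using slot_index(1)[OF sT] by simp
    finally show ?thesis using g[OF s] by simp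
  qed
  then have "(LINT s:{0..t}|lborel. g s)
      = (LINT s:{0..t}|lborel. (\<Sum>k<length seq. indicator (slot k) s *\<^sub>R a k))"
    by (intro set_lebesgue_integral_cong) simp_all
  also have "\<dots> = (\<Sum>k<length seq. measure lborel (slot k \<inter> {0..t}) *\<^sub>R a k)"
    by (rule set_integral_indicator_sum) (rule slot_sets)
  finally show ?thesis .
qed

lemma heading_integral:
  assumes "t \<in> {0..T}"
  shows "heading t $ j = \<Theta>0 $ j + (LINT s:{0..t}|lborel. (if \<alpha> (switching s) j then 0 else speed / r))"
  using integral_piecewise[OF assms, of _ "\<lambda>k. if \<alpha> (grp k) j then 0 else speed / r"]
  by (simp add: heading_def switching_def)

lemma heading_on_slot:
  assumes k: "k < length seq" and s: "s \<in> slot k" and member: "\<alpha> (grp k) j"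
  shows "heading s $ j = heading_before k $ j"
proof -
  have "measure lborel (slot l \<inter> {0..s}) * (if \<alpha> (grp l) j then 0 else speed / r)
      = (if l < k then (if \<alpha> (grp l) j then 0 else dur l / r) else 0)"
    if l: "l < length seq" for l
  proof (cases l k rule: linorder_cases)
    case less
    have "switch_time (Suc l) \<le> switch_time k"
      using less k by (intro switch_time_mono) auto
    then have "slot l \<inter> {0..s} = slot l"
      using slot_subset[OF l] slot_bounds[of _ l] slot_bounds[OF s] by fastforce
    then show ?thesis
      using less measure_slot[OF l] speed_pos by auto
  next
    case equal
    then show ?thesis using member by simp
  next
    case greater
    have "s < switch_time (Suc k)"
      using greater l by (intro slot_before[OF s]) auto
    moreover have "switch_time (Suc k) \<le> switch_time l"
      using greater l by (intro switch_time_mono) auto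
    ultimately have "slot l \<inter> {0..s} = {}"
      using slot_bounds[of _ l] by force
    then show ?thesis using greater by simp
  qed
  then have "(\<Sum>l<length seq. measure lborel (slot l \<inter> {0..s}) * (if \<alpha> (grp l) j then 0 else speed / r))
      = (\<Sum>l<length seq. if l < k then (if \<alpha> (grp l) j then 0 else dur l / r) else 0)"
    by (intro sum.cong) auto
  also have "\<dots> = (\<Sum>l\<in>{..<length seq} \<inter> {..<k}. if \<alpha> (grp l) j then 0 else dur l / r)"
    by (simp add: sum.inter_restrict lessThan_iff)
  also have "{..<length seq} \<inter> {..<k} = {..<k}"
    using k by auto
  finally show ?thesis
    by (simp add: heading_def heading_before_def)
qed

lemma position_integral:
  assumes "t \<in> {0..T}"
  shows "position t $ j = p0 $ j + (LINT s:{0..t}|lborel.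
           (if \<alpha> (switching s) j then complex_of_real speed * cis (heading s $ j) else 0))"
proof -
  have "(if \<alpha> (switching s) j then complex_of_real speed * cis (heading s $ j) else 0)
      = (if \<alpha> (grp (slot_index s)) j
         then complex_of_real speed * cis (heading_before (slot_index s) $ j) else 0)"
    if "s \<in> {0..t}" for s
  proof -
    have "s \<in> {0..T}" using that assms by auto
    then show ?thesis
      using heading_on_slot[OF slot_index] by (simp add: switching_def)
  qed
  from integral_piecewise[OF assms, where a = "\<lambda>k. if \<alpha> (grp k) j
      then complex_of_real speed * cis (heading_before k $ j) else 0", OF this]
  show ?thesis
    by (simp add: position_def)
qed

lemma fold_take_seq:
  "k \<le> length seq \<Longrightarrow> fold (act_step \<alpha> r) (take k seq) (p0, \<Theta>0) = (position_before k, heading_before k)"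
proof (induction k)
  case 0
  then show ?case by (simp add: position_before_def heading_before_def vec_eq_iff)
next
  case (Suc k)
  then have "seq ! k = (grp k, dur k)" and "k < length seq"
    by (simp_all add: grp_def dur_def)
  with Suc show ?case
    by (simp add: take_Suc_conv_app_nth act_step_def position_before_def heading_before_def vec_eq_iff)
qed

lemma position_final: "position T = fst (fold (act_step \<alpha> r) seq (p0, \<Theta>0))"
proof -
  have "measure lborel (slot k \<inter> {0..T}) *\<^sub>R
        (if \<alpha> (grp k) j then complex_of_real speed * cis (heading_before k $ j) else 0)
      = (if \<alpha> (grp k) j then complex_of_real (dur k) * cis (heading_before k $ j) else 0)"
    if "k < length seq" for k j
  proof -
    have "slot k \<inter> {0..T} = slot k" using slot_subset[OF that] by blast
    then show ?thesis using measure_slot[OF that] speed_pos by (simp add: scaleR_conv_of_real)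
  qed
  then have "position T = position_before (length seq)"
    by (simp add: position_def position_before_def vec_eq_iff)
  then show ?thesis using fold_take_seq[of "length seq"] by simp
qed

lemma is_traj_schedule: "is_traj \<alpha> m r T switching (\<lambda>_. speed) p0 \<Theta>0 position heading"
proof -
  have "piecewise_switching m T switching"
    unfolding piecewise_switching_def
  proof (intro conjI ballI exI[of _ switch_time] exI[of _ "length seq"] allI impI)
    fix s assume "s \<in> {0..T}"
    then show "switching s \<in> {1..m}" using slot_index grp_dur by (simp add: switching_def)
  next
    fix k assume "k < length seq"
    then show "switch_time k < switch_time (Suc k)" by (intro switch_time_less) auto
  next
    fix k s assume k: "k < length seq" and s: "s \<in> {switch_time k..<switch_time (Suc k)}"
    then have "s \<in> slot k" and "switch_time k \<in> slot k" by (auto simp: slot_def)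
    then show "switching s = switching (switch_time k)"
      using slot_index_eq[OF k] by (simp add: switching_def)
  qed (simp_all add: switch_time_last)
  moreover have "admissible_input T (\<lambda>_. speed)"
    unfolding admissible_input_def set_integrable_def
    using speed_pos by (auto simp: emeasure_lborel_Icc_eq)
  ultimately show ?thesis
    unfolding is_traj_def using heading_integral position_integral by blast
qed

lemma fold_in_reach_set: "fst (fold (act_step \<alpha> r) seq (p0, \<Theta>0)) \<in> reach_set \<alpha> m r p0 \<Theta>0 T"
  unfolding reach_set_def position_final[symmetric]
  using is_traj_schedule T_pos by fastforce

end

context swarm
begin

lemma reach_set_eq_UNIV:
  assumes "T > 0"
  shows "reach_set \<alpha> m r p0 \<Theta>0 T = UNIV"
proof (intro set_eqI iffI)
  fix p :: "complex^'n"
  obtain seq where seq: "admissible_seq seq" "seq \<noteq> []" "fst (fold (act_step \<alpha> r) seq (p0, \<Theta>0)) = p"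
    using reachable_position by blast
  interpret schedule \<alpha> m r seq p0 \<Theta>0 T
    using seq assms by unfold_locales
  show "p \<in> reach_set \<alpha> m r p0 \<Theta>0 T"
    using fold_in_reach_set seq(3) by simp
qed simp

end

theorem mainTheorem6:
  fixes \<alpha> :: "nat \<Rightarrow> 'n::finite \<Rightarrow> bool" and m :: nat and r :: real
  assumes "r > 0" and "group_alloc_ok \<alpha> m"
  shows "(\<forall>(p0 :: complex^'n) (\<Theta>0 :: real^'n) k (v :: complex).
            \<exists>seq :: (nat \<times> real) list.
              (\<forall>(i, s)\<in>set seq. i \<in> {1..m} \<and> s > 0) \<and>
              fst (fold (act_step \<alpha> r) seq (p0, \<Theta>0)) = p0 + (\<chi> j. if j = k then v else 0))
       \<and> (\<forall>(p0 :: complex^'n) (\<Theta>0 :: real^'n) T. T > 0 \<longrightarrow>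
            p0 \<in> interior (reach_set \<alpha> m r p0 \<Theta>0 T))"
proof -
  interpret swarm \<alpha> m r
    using assms by unfold_locales
  show ?thesis
    using translate_robot reach_set_eq_UNIV unfolding admissible_seq_def by auto
qed

end
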